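(* (1) For every term $t$, $nv(t)=un(t)\cup an(t)$. (2) For every program $p$, $nv(p)=un(p)\cup an(p)$. (3) For every open term evaluation context $\mathcal{H}$, $nv(\mathcal{H})=un(\mathcal{H})\cup an(\mathcal{H})$.
   Context: Terms: $t,u ::= x \mid \lambda x.t \mid t\,u$; values $v ::= \lambda x.t$; environments $E ::= \epsilon\mid E[x\leftarrow t]$ (explicit substitutions); programs $p ::= (t,E)$, with $x$ bound in $E$ and $u$ in $(u,E[x\leftarrow t])$, up to $\alpha$-renaming. Inert terms: $i ::= x\mid i\,f$ where $f ::= v\mid i$. Open term evaluation contexts: $\mathcal{H} ::= \langle\cdot\rangle\mid \mathcal{H}\,t\mid i\,\mathcal{H}$. Needed variables: $nv(x)=\{x\}$, $nv(\lambda x.t)=\emptyset$, $nv(t\,u)=nv(t)\cup nv(u)$; $nv((t,\epsilon))=nv(t)$, $nv((t,E[x\leftarrow u]))=nv((t,E))$ if $x\notin nv((t,E))$, else $(nv((t,E))\setminus\{x\})\cup nv(u)$; $nv(\langle\cdot\rangle)=\emptyset$, $nv(\mathcal{H}\,t)=nv(\mathcal{H})$, $nv(i\,\mathcal{H})=nv(i)\cup nv(\mathcal{H})$. Applied variables: $an(\lambda x.t)=\emptyset$, $an(x)=\emptyset$, $an(t\,u)=\{x\}\cup an(u)$ if $t=x$ is a variable, and $an(t)\cup an(u)$ if $t$ is not a variable; $an((t,\epsilon))=an(t)$; $an((t,E[x\leftarrow u]))$ is: $an((t,E))$ if $x\notin nv((t,E))$; $(an((t,E))\setminus\{x\})\cup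 an(u)$ if $x\in nv((t,E))$ and ($x\notin an((t,E))$ or $u$ is not a variable); $(an((t,E))\setminus\{x\})\cup\{y\}$ if $x\in nv((t,E))$, $x\in an((t,E))$ and $u=y$ is a variable. For term contexts: $an(\langle\cdot\rangle)=\emptyset$, $an(\mathcal{H}\,t)=an(\mathcal{H})$, $an(i\,\mathcal{H})=an(i)\cup an(\mathcal{H})$. Unapplied variables: $un(\lambda x.t)=\emptyset$, $un(x)=\{x\}$, $un(t\,u)=un(u)$ if $t$ is a variable, and $un(t)\cup un(u)$ otherwise; $un((t,\epsilon))=un(t)$; $un((t,E[x\leftarrow u]))$ is: $un((t,E))$ if $x\notin un((t,E))$ and ($x\notin nv((t,E))$ or $u$ is a variable); $(un((t,E))\setminus\{x\})\cup un(u)$ if $x\in un((t,E))$ or ($x\in nv((t,E))$ and $u$ is not a variable). For term contexts: $un(\langle\cdot\rangle)=\emptyset$, $un(\mathcal{H}\,t)=un(\mathcal{H})$, $un(i\,\mathcal{H})=un(i)\cup un(\mathcal{H})$. *)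

theory Defs
  imports Main
begin

datatype 'v trm = Var 'v | Lam 'v "'v trm" | App "'v trm" "'v trm"

datatype 'v env = Eps | Sub "'v env" 'v "'v trm"

type_synonym 'v prog = "'v trm \<times> 'v env"

fun is_var :: "'v trm \<Rightarrow> bool" where
  "is_var (Var x) = True"
| "is_var _ = False"

fun is_val :: "'v trm \<Rightarrow> bool" where
  "is_val (Lam x t) = True"
| "is_val _ = False"

inductive inert :: "'v trm \<Rightarrow> bool" where
  inert_var: "inert (Var x)"
| inert_app: "inert i \<Longrightarrow> is_val f \<or> inert f \<Longrightarrow> inert (App i f)"

datatype 'v ctx = Hole | CAppL "'v ctx" "'v trm" | CAppR "'v trm" "'v ctx"

inductive octx :: "'v ctx \<Rightarrow> bool" where
  octx_hole: "octx Hole"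
| octx_appl: "octx H \<Longrightarrow> octx (CAppL H t)"
| octx_appr: "inert i \<Longrightarrow> octx H \<Longrightarrow> octx (CAppR i H)"

fun nv :: "'v trm \<Rightarrow> 'v set" where
  "nv (Var x) = {x}"
| "nv (Lam x t) = {}"
| "nv (App t u) = nv t \<union> nv u"

fun nvp :: "'v prog \<Rightarrow> 'v set" where
  "nvp (t, Eps) = nv t"
| "nvp (t, Sub E x u) =
     (if x \<notin> nvp (t, E) then nvp (t, E) else (nvp (t, E) - {x}) \<union> nv u)"

fun nvc :: "'v ctx \<Rightarrow> 'v set" where
  "nvc Hole = {}"
| "nvc (CAppL H t) = nvc H"
| "nvc (CAppR i H) = nv i \<union> nvc H"

fun an :: "'v trm \<Rightarrow> 'v set" where
  "an (Lam x t) = {}"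
| "an (Var x) = {}"
| "an (App t u) = (case t of Var x \<Rightarrow> {x} \<union> an u | _ \<Rightarrow> an t \<union> an u)"

fun anp :: "'v prog \<Rightarrow> 'v set" where
  "anp (t, Eps) = an t"
| "anp (t, Sub E x u) =
     (if x \<notin> nvp (t, E) then anp (t, E)
      else if x \<notin> anp (t, E) \<or> \<not> is_var u then (anp (t, E) - {x}) \<union> an u
      else (case u of Var y \<Rightarrow> (anp (t, E) - {x}) \<union> {y} | _ \<Rightarrow> undefined))"

fun anc :: "'v ctx \<Rightarrow> 'v set" where
  "anc Hole = {}"
| "anc (CAppL H t) = anc H"
| "anc (CAppR i H) = an i \<union> anc H"

fun un :: "'v trm \<Rightarrow> 'v set" where
  "un (Lam x t) = {}"
| "un (Var x) = {x}"
| "un (App t u) = (if is_var t then un u else un t \<union> un u)"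

fun unp :: "'v prog \<Rightarrow> 'v set" where
  "unp (t, Eps) = un t"
| "unp (t, Sub E x u) =
     (if x \<notin> unp (t, E) \<and> (x \<notin> nvp (t, E) \<or> is_var u) then unp (t, E)
      else (unp (t, E) - {x}) \<union> un u)"

fun unc :: "'v ctx \<Rightarrow> 'v set" where
  "unc Hole = {}"
| "unc (CAppL H t) = unc H"
| "unc (CAppR i H) = un i \<union> unc H"

end

theory Submission
  imports Defs
begin

lemma nv_eq_un_an: "nv t = un t \<union> an t"
proof (induction t)
  case (App t u)
  then show ?case by (cases t) auto
qed auto

text \<open>In the step case for \<open>E[x \<leftarrow> u]\<close> with \<open>x\<close> needed, \<open>x\<close> is replaced by the
  needed variables of \<open>u\<close>; when \<open>u = y\<close> is a variable the three definitions route \<open>y\<close> to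
  the applied or unapplied part according to where \<open>x\<close> was.\<close>
lemma nvp_eq_unp_anp: "nvp (t, E) = unp (t, E) \<union> anp (t, E)"
proof (induction E)
  case Eps
  then show ?case by (simp add: nv_eq_un_an)
next
  case (Sub E x u)
  then show ?case
    using nv_eq_un_an[of u] by (cases u) auto
qed

lemma nvc_eq_unc_anc: "nvc H = unc H \<union> anc H"
  by (induction H) (auto simp: nv_eq_un_an)

theorem mainTheorem4:
  shows "(\<forall>t :: 'v trm. nv t = un t \<union> an t)
       \<and> (\<forall>p :: 'v prog. nvp p = unp p \<union> anp p)
       \<and> (\<forall>H :: 'v ctx. octx H \<longrightarrow> nvc H = unc H \<union> anc H)"
  using nv_eq_un_an nvp_eq_unp_anp nvc_eq_unc_anc by (metis surj_pair)

end
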